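(* Let $n\in\mathbb{N}$, let $a\ge2$ be an integer, $k_1,\ldots,k_n\in\mathbb{N}$, $K=\operatorname{lcm}(k_1,\ldots,k_n)$, and let $f_1,\ldots,f_n,g_1,\ldots,g_n$ be arbitrary arithmetic functions. For each tuple $d_1|k_1,\ldots,d_n|k_n$ write $M=\operatorname{lcm}(d_1,\ldots,d_n)$, $L=K/M$, $F=\prod_{i=1}^n f_i(d_i)g_i(k_i/d_i)$, and put $G(j)=\prod_{i=1}^n s^{(a)}_{f_i,g_i,\mathbf 1}(k_i,j)$ for $j\in\mathbb{N}_0$. Then $$\sum_{j=1}^{K^a}\log\Gamma\Bigl(\frac{j}{K^a}\Bigr)G(j)=\frac{K^a}{2}\log(2\pi)\sum_{d_1|k_1,\ldots,d_n|k_n}\frac{F}{M^a}-\frac12\log(2\pi K^a)\prod_{i=1}^n(f_i*g_i)(k_i)+\frac a2\sum_{d_1|k_1,\ldots,d_n|k_n}(\log M)\,F,$$ $$\sum_{j=0}^{K^a}\binom{K^a}{j}G(j)=2^{K^a}\sum_{d_1|k_1,\ldots,d_n|k_n}\frac{F}{M^a}\sum_{\ell=1}^{M^a}(-1)^{\ell L^a}\cos^{K^a}\Bigl(\frac{\pi\ell}{M^a}\Bigr),$$ and for every integer $m\ge0$, $$\sum_{j=0}^{K^a-1}B_m\Bigl(\frac{j}{K^a}\Bigr)G(j)=\frac{B_m}{K^{a(m-1)}}\sum_{d_1|k_1,\ldots,d_n|k_n}M^{a(m-1)}F.$$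
   Context: An arithmetic function is a map $\mathbb{N}\to\mathbb{C}$; $(f*g)(n)=\sum_{d|n}f(d)g(n/d)$. For $a\in\mathbb{N}$ and $k\in\mathbb{N}$, $j\in\mathbb{N}_0$, $s^{(a)}_{f,g,\mathbf 1}(k,j)=\sum_{d|k,\ d^a|j} f(d)\,g(k/d)$ (for $j=0$ every $d^a$ divides $j$, so $s^{(a)}_{f,g,\mathbf 1}(k,0)=(f*g)(k)$). $\Gamma$ is the Gamma function. The Bernoulli polynomials are defined by $\frac{te^{xt}}{e^t-1}=\sum_{m\ge0}B_m(x)\frac{t^m}{m!}$ and $B_m=B_m(0)$ are the Bernoulli numbers. *)

theory Defs
  imports "HOL-Analysis.Analysis" "HOL-Computational_Algebra.Formal_Power_Series"
begin

definition dirichlet_conv :: "(nat \<Rightarrow> complex) \<Rightarrow> (nat \<Rightarrow> complex) \<Rightarrow> nat \<Rightarrow> complex" where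
  "dirichlet_conv f g n = (\<Sum>d\<in>{d. d dvd n}. f d * g (n div d))"

definition s_fun :: "nat \<Rightarrow> (nat \<Rightarrow> complex) \<Rightarrow> (nat \<Rightarrow> complex) \<Rightarrow> nat \<Rightarrow> nat \<Rightarrow> complex" where
  "s_fun a f g k j = (\<Sum>d\<in>{d. d dvd k \<and> d ^ a dvd j}. f d * g (k div d))"

definition bernpoly :: "nat \<Rightarrow> real \<Rightarrow> real" where
  "bernpoly m x = fact m * fps_nth (fps_X * fps_exp x / (fps_exp 1 - 1)) m"

definition bernoulli_num :: "nat \<Rightarrow> real" where
  "bernoulli_num m = bernpoly m 0"

end

theory Submission
  imports Defs "HOL-Computational_Algebra.Fundamental_Theorem_Algebra"
begin

text \<open>Expanding the product, G(j) is the sum of F(d) over the tuples d with M(d)^a dividing j.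
  Exchanging the order of summation, each of the three sums over j becomes a sum over d of F(d) times
  the same sum over the multiples j = M(d)^a t only, i.e. over the fractions t / L^a. Those inner sums are
  classical: the multiplication formula for log Gamma at 0 (from the reflection formula and
  the product of 2 sin(pi t / N) over 0 < t < N, which equals N), the roots-of-unity multisection of the
  binomial theorem, and Raabe's multiplication formula for the Bernoulli polynomials.\<close>

lemma norm_one_minus_cis: "norm (1 - cis \<theta>) = 2 * \<bar>sin (\<theta> / 2)\<bar>"
proof -
  have "(norm (1 - cis \<theta>))\<^sup>2 = (1 - cos \<theta>)\<^sup>2 + (sin \<theta>)\<^sup>2"
    by (simp add: cmod_def)
  also have "\<dots> = (2 * \<bar>sin (\<theta> / 2)\<bar>)\<^sup>2"
    using sin_cos_squared_add[of \<theta>] cos_double_sin[of "\<theta> / 2"]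
    by (simp add: power2_eq_square algebra_simps)
  finally show ?thesis
    by (rule power2_eq_imp_eq) auto
qed

lemma sum_monom_times_linear:
  "(\<Sum>k<N. monom 1 k) * [:-1, 1:] = monom 1 N - (1 :: 'a :: comm_ring_1 poly)"
proof -
  have "(\<Sum>k<N. monom 1 k) * [:-1, 1:] = (\<Sum>k<N. monom 1 (Suc k) - monom (1 :: 'a) k)"
    unfolding sum_distrib_right by (intro sum.cong refl) (simp add: monom_Suc algebra_simps)
  also have "\<dots> = monom 1 N - 1"
    by (simp add: sum_lessThan_telescope monom_0 one_pCons)
  finally show ?thesis .
qed

lemma poly_sum_monom_times:
  "poly (\<Sum>k<N. monom 1 k) z * (z - 1) = z ^ N - (1 :: 'a :: comm_ring_1)"
  using arg_cong[OF sum_monom_times_linear[of N], of "\<lambda>p. poly p z"]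
  by (simp add: poly_monom algebra_simps)

\<comment> \<open>A double root would be a root of unity annihilating the derivative N z^(N-1) of z^N - 1.\<close>
lemma rsquarefree_sum_monom:
  assumes N: "N > 0"
  shows "rsquarefree (\<Sum>k<N. monom (1 :: 'a :: field_char_0) k)"
  unfolding rsquarefree_roots
proof (intro allI notI)
  define q :: "'a poly" where "q = (\<Sum>k<N. monom 1 k)"
  fix z assume z: "poly q z = 0 \<and> poly (pderiv q) z = 0"
  have "pderiv (q * [:-1, 1:]) = pderiv q * [:-1, 1:] + q"
    by (simp only: pderiv_mult) (simp add: pderiv_pCons)
  then have "poly (pderiv q) z * (z - 1) + poly q z = of_nat N * z ^ (N - 1)"
    using arg_cong[OF sum_monom_times_linear[of N], of "\<lambda>p. poly (pderiv p) z"]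
    by (simp add: q_def pderiv_diff pderiv_monom poly_monom algebra_simps)
  moreover have "poly q 0 = 1"
    using N by (simp add: q_def poly_0_coeff_0 coeff_sum)
  ultimately show False
    using z N by (auto simp: zero_power)
qed

lemma sum_monom_eq_prod_roots_unity:
  assumes N: "N > 0"
  shows "(\<Sum>k<N. monom 1 k) = (\<Prod>z\<in>{z. z ^ N = 1} - {1}. [:-z, 1 :: complex:])"
proof -
  define q :: "complex poly" where "q = (\<Sum>k<N. monom 1 k)"
  have coeff_q: "coeff q k = (if k < N then 1 else 0)" for k
    by (simp add: q_def coeff_sum)
  have roots: "{z. poly q z = 0} = {z. z ^ N = 1} - {1}"
  proof -
    have "poly q z = 0 \<longleftrightarrow> z ^ N = 1 \<and> z \<noteq> 1" for z
    proof (cases "z = 1")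
      case False
      then show ?thesis using poly_sum_monom_times[of N z] by (auto simp: q_def)
    qed (use N in \<open>simp add: q_def poly_sum poly_monom\<close>)
    then show ?thesis by auto
  qed
  have "degree q = N - 1"
    by (rule antisym, rule degree_le) (use N in \<open>auto simp: coeff_q intro: le_degree\<close>)
  then have "lead_coeff q = 1"
    using N by (simp add: coeff_q)
  then show ?thesis
    using complex_poly_decompose_rsquarefree[OF rsquarefree_sum_monom[OF N]]
    by (simp add: q_def[symmetric] roots)
qed

lemma prod_one_minus_roots_unity:
  assumes N: "N > 0"
  shows "(\<Prod>t\<in>{1..<N}. 1 - cis (2 * pi * real t / real N)) = (of_nat N :: complex)"
proof -
  have roots: "bij_betw (\<lambda>t. cis (2 * pi * real t / real N)) {1..<N} ({z. z ^ N = 1} - {1})"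
  proof -
    have "{..<N} - {0} = {1..<N}" by auto
    then show ?thesis
      using bij_betw_DiffI[OF Complex.bij_betw_roots_unity[OF N], of "{0}" "{1}"] N by simp
  qed
  have "(of_nat N :: complex) = poly (\<Sum>k<N. monom 1 k) 1"
    by (simp add: poly_sum poly_monom)
  also have "\<dots> = (\<Prod>z\<in>{z. z ^ N = 1} - {1}. 1 - z)"
    by (simp add: sum_monom_eq_prod_roots_unity[OF N] poly_prod)
  also have "\<dots> = (\<Prod>t\<in>{1..<N}. 1 - cis (2 * pi * real t / real N))"
    by (rule prod.reindex_bij_betw[OF roots, symmetric])
  finally show ?thesis ..
qed

lemma prod_sin_pi_div:
  assumes N: "N > 0"
  shows "(\<Prod>t\<in>{1..<N}. 2 * sin (pi * real t / real N)) = real N"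
proof -
  have "real N = norm (\<Prod>t\<in>{1..<N}. 1 - cis (2 * pi * real t / real N))"
    by (simp only: prod_one_minus_roots_unity[OF N] norm_of_nat)
  also have "\<dots> = (\<Prod>t\<in>{1..<N}. 2 * \<bar>sin (pi * real t / real N)\<bar>)"
    by (simp add: norm_one_minus_cis flip: prod_norm)
  also have "\<dots> = (\<Prod>t\<in>{1..<N}. 2 * sin (pi * real t / real N))"
  proof (intro prod.cong refl)
    fix t assume "t \<in> {1..<N}"
    then have "sin (pi * real t / real N) > 0"
      by (intro sin_gt_zero) (auto simp: field_simps)
    then show "2 * \<bar>sin (pi * real t / real N)\<bar> = 2 * sin (pi * real t / real N)"
      by simp
  qed
  finally show ?thesis ..
qed

lemma Gamma_reflection_real: "Gamma x * Gamma (1 - x) = pi / sin (pi * x)"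
proof -
  have "complex_of_real (Gamma x * Gamma (1 - x)) = Gamma (of_real x) * Gamma (1 - of_real x)"
    by (simp flip: Gamma_complex_of_real)
  also have "\<dots> = of_real pi / sin (of_real pi * of_real x)"
    by (rule Gamma_reflection_complex)
  also have "\<dots> = of_real (pi / sin (pi * x))"
    by (simp add: sin_of_real flip: of_real_mult)
  finally show ?thesis
    by (simp only: of_real_eq_iff)
qed

lemma ln_Gamma_reflection_real:
  assumes "0 < x" "x < 1"
  shows "ln (Gamma x) + ln (Gamma (1 - x)) = ln (2 * pi) - ln (2 * sin (pi * x))"
proof -
  have "Gamma x > 0" "Gamma (1 - x) > 0" "sin (pi * x) > 0"
    using assms by (auto intro: Gamma_real_pos sin_gt_zero)
  then have "ln (Gamma x) + ln (Gamma (1 - x)) = ln ((2 * pi) / (2 * sin (pi * x)))"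
    by (simp add: Gamma_reflection_real flip: ln_mult_pos)
  also have "\<dots> = ln (2 * pi) - ln (2 * sin (pi * x))"
    using \<open>sin (pi * x) > 0\<close> by (intro ln_divide_pos) simp_all
  finally show ?thesis .
qed

\<comment> \<open>Pairing t with N - t turns the sum into one of logarithms of the reflection formula.\<close>
lemma sum_ln_Gamma_fractions:
  assumes N: "N > 0"
  shows "(\<Sum>t=1..N. ln (Gamma (real t / real N))) = (real N - 1) / 2 * ln (2 * pi) - ln (real N) / 2"
proof -
  let ?S = "\<Sum>t\<in>{1..<N}. ln (Gamma (real t / real N))"
  have in_unit_interval: "0 < real t / real N" "real t / real N < 1" if "t \<in> {1..<N}" for t
    using that by auto
  have sin_pos: "sin (pi * real t / real N) > 0" if "t \<in> {1..<N}" for t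
    using that by (intro sin_gt_zero) (auto simp: field_simps)
  have "?S = (\<Sum>t\<in>{1..<N}. ln (Gamma (1 - real t / real N)))"
  proof (rule sum.reindex_bij_witness[of _ "\<lambda>t. N - t" "\<lambda>t. N - t"])
    fix t assume "t \<in> {1..<N}"
    then have "1 - real (N - t) / real N = real t / real N"
      by (simp add: of_nat_diff field_simps)
    then show "ln (Gamma (1 - real (N - t) / real N)) = ln (Gamma (real t / real N))"
      by simp
  qed auto
  then have "2 * ?S = (\<Sum>t\<in>{1..<N}. ln (Gamma (real t / real N)) + ln (Gamma (1 - real t / real N)))"
    by (simp add: sum.distrib)
  also have "\<dots> = (\<Sum>t\<in>{1..<N}. ln (2 * pi) - ln (2 * sin (pi * real t / real N)))"
    using in_unit_interval by (intro sum.cong refl) (simp add: ln_Gamma_reflection_real)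
  also have "\<dots> = (real N - 1) * ln (2 * pi) - ln (\<Prod>t\<in>{1..<N}. 2 * sin (pi * real t / real N))"
    using N sin_pos by (subst ln_prod) (force simp: sum_subtractf of_nat_diff)+
  also have "\<dots> = (real N - 1) * ln (2 * pi) - ln (real N)"
    by (simp only: prod_sin_pi_div[OF N])
  finally have "2 * ?S = (real N - 1) * ln (2 * pi) - ln (real N)" .
  moreover have "{1..N} = insert N {1..<N}"
    using N by auto
  ultimately show ?thesis
    using N by simp
qed

lemma cis_root_unity_eq_1_iff:
  assumes q: "q > 0"
  shows "cis (2 * pi * real j / real q) = 1 \<longleftrightarrow> q dvd j"
proof -
  have "cis (2 * pi * real j / real q) = exp (2 * of_real pi * \<i> * of_nat j / of_nat q)"
    by (simp add: cis_conv_exp mult_ac)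
  then show ?thesis
    using complex_root_unity_eq_1[of q j] q by simp
qed

lemma sum_roots_unity_power:
  assumes q: "q > 0"
  shows "(\<Sum>l=1..q. cis (2 * pi * real l / real q) ^ j) = (if q dvd j then of_nat q else 0)"
proof -
  define z where "z = cis (2 * pi * real j / real q)"
  have powers: "cis (2 * pi * real l / real q) ^ j = z ^ l" for l
    unfolding z_def Complex.DeMoivre by (simp add: mult_ac)
  have "z ^ q = 1"
    using q by (simp add: z_def Complex.DeMoivre)
  have "(\<Sum>l=1..q. z ^ l) = z * (\<Sum>l<q. z ^ l)"
    by (simp add: sum.atLeast1_atMost_eq sum_distrib_left)
  also have "\<dots> = (if q dvd j then of_nat q else 0)"
  proof (cases "q dvd j")
    case True
    then have "z = 1" using cis_root_unity_eq_1_iff[OF q] by (simp add: z_def)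
    then show ?thesis using True by simp
  next
    case False
    then have "z \<noteq> 1" using cis_root_unity_eq_1_iff[OF q] by (simp add: z_def)
    then show ?thesis using False \<open>z ^ q = 1\<close> by (simp add: geometric_sum)
  qed
  finally show ?thesis by (simp only: powers)
qed

lemma one_plus_cis_power: "(1 + cis x) ^ P = cis (real P * x / 2) * of_real ((2 * cos (x / 2)) ^ P)"
proof -
  have "1 + cis x = cis (x / 2) * of_real (2 * cos (x / 2))"
    using cos_double_cos[of "x / 2"] sin_double[of "x / 2"]
    by (simp add: complex_eq_iff power2_eq_square)
  moreover have "cis (x / 2) ^ P = cis (real P * x / 2)"
    by (simp add: Complex.DeMoivre)
  ultimately show ?thesis
    by (simp add: power_mult_distrib)
qed

lemma fps_exp_minus_one_nonzero:
  assumes "c \<noteq> 0"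
  shows "fps_exp c - 1 \<noteq> (0 :: 'a :: field_char_0 fps)"
proof
  assume "fps_exp c - 1 = (0 :: 'a fps)"
  then have "fps_nth (fps_exp c - 1 :: 'a fps) 1 = 0" by simp
  with assms show False by simp
qed

lemma bernpoly_egf_times_denominator:
  "fps_X * fps_exp x / (fps_exp 1 - 1) * (fps_exp 1 - 1) = fps_X * fps_exp (x :: real)"
proof (rule fps_times_divide_eq)
  show "fps_exp 1 - 1 \<noteq> (0 :: real fps)"
    by (rule fps_exp_minus_one_nonzero) simp
  have "subdegree (fps_exp 1 - 1 :: real fps) \<le> 1"
    by (rule subdegree_leI) simp
  moreover have "subdegree (fps_X * fps_exp x :: real fps) = 1"
    by (simp add: subdegree_mult)
  ultimately show "subdegree (fps_exp 1 - 1 :: real fps) \<le> subdegree (fps_X * fps_exp x :: real fps)"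
    by simp
qed

\<comment> \<open>Both sides are m! times the m-th coefficient of a power series S with S (e^(X/N) - 1) = X:
  on the left by telescoping the exponentials, on the right by rescaling X to X/N in the
  generating function of the Bernoulli numbers.\<close>
lemma sum_bernpoly_fractions:
  assumes N: "N > 0"
  shows "(\<Sum>t<N. bernpoly m (real t / real N)) = real N powi (1 - int m) * bernoulli_num m"
proof -
  define E :: "real fps" where "E = fps_exp 1 - 1"
  define B where "B x = fps_X * fps_exp x / E" for x
  define c where "c = 1 / real N"
  define w :: "real fps" where "w = fps_exp c"
  have B_times_E: "B x * E = fps_X * fps_exp x" for x
    unfolding B_def E_def by (rule bernpoly_egf_times_denominator)
  have E_nz: "E \<noteq> 0" and w_nz: "w - 1 \<noteq> 0"
    unfolding E_def w_def c_def using N by (auto intro!: fps_exp_minus_one_nonzero)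
  define S where "S = (\<Sum>t<N. B (real t / real N))"
  define T where "T = fps_const (real N) * (B 0 oo (fps_const c * fps_X))"
  have "S * E * (w - 1) = fps_X * (w ^ N - 1)"
  proof -
    have "S * E = fps_X * (\<Sum>t<N. w ^ t)"
      unfolding S_def sum_distrib_right B_times_E sum_distrib_left w_def fps_exp_power_mult
      by (simp add: c_def)
    then show ?thesis
      by (simp add: power_diff_1_eq mult_ac)
  qed
  also have "w ^ N - 1 = E"
    using N by (simp add: w_def E_def c_def fps_exp_power_mult)
  finally have "S * (w - 1) = fps_X"
    using E_nz by (simp add: mult_ac)
  moreover have "T * (w - 1) = fps_X"
  proof -
    have "(B 0 oo (fps_const c * fps_X)) * (w - 1) = (B 0 * E) oo (fps_const c * fps_X)"
      by (simp add: fps_compose_mult_distrib fps_compose_sub_distrib E_def w_def)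
    also have "\<dots> = fps_const c * fps_X"
      by (simp add: B_times_E)
    finally show ?thesis
      using N by (simp add: T_def c_def mult.assoc flip: fps_const_mult)
  qed
  ultimately have "S = T"
    using w_nz by (metis mult_right_cancel)
  have "(\<Sum>t<N. bernpoly m (real t / real N)) = fact m * fps_nth S m"
    by (simp add: S_def B_def E_def bernpoly_def fps_sum_nth sum_distrib_left)
  also have "\<dots> = real N * c ^ m * bernoulli_num m"
    by (simp add: \<open>S = T\<close> T_def bernoulli_num_def bernpoly_def B_def E_def)
  also have "\<dots> = real N powi (1 - int m) * bernoulli_num m"
    using N by (simp add: c_def power_int_diff power_one_over field_simps)
  finally show ?thesis .
qed

lemma sum_if_dvd_eq_sum_multiples:
  fixes q :: nat
  assumes "finite A" "q > 0"
  shows "(\<Sum>j\<in>A. if q dvd j then h j else 0) = (\<Sum>t\<in>{t. q * t \<in> A}. h (q * t))"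
proof -
  have "(\<Sum>j\<in>A. if q dvd j then h j else 0) = (\<Sum>j\<in>{j\<in>A. q dvd j}. h j)"
    using assms(1) by (rule sum.inter_filter[symmetric])
  also have "{j\<in>A. q dvd j} = (\<lambda>t. q * t) ` {t. q * t \<in> A}"
    by (auto elim!: dvdE)
  also have "(\<Sum>j\<in>\<dots>. h j) = (\<Sum>t\<in>{t. q * t \<in> A}. h (q * t))"
    using assms(2) by (subst sum.reindex) (auto simp: inj_on_def)
  finally show ?thesis .
qed

\<comment> \<open>Averaging (1 + \<omega>)^(qN) over the q-th roots of unity \<omega> keeps exactly the binomial coefficients
  whose lower index is a multiple of q.\<close>
lemma binomial_multisection:
  assumes q: "q > 0"
  shows "real q * (\<Sum>t\<le>N. real (q * N choose (q * t)))
    = 2 ^ (q * N) * (\<Sum>l=1..q. (-1) ^ (l * N) * cos (pi * real l / real q) ^ (q * N))"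
proof -
  define P where "P = q * N"
  define \<omega> where "\<omega> l = cis (2 * pi * real l / real q)" for l
  have "complex_of_real (real q * (\<Sum>t\<le>N. real (P choose (q * t))))
      = of_nat q * (\<Sum>j\<le>P. if q dvd j then of_nat (P choose j) else 0)"
    using q by (simp add: sum_if_dvd_eq_sum_multiples P_def atMost_def)
  also have "\<dots> = (\<Sum>j\<le>P. of_nat (P choose j) * (\<Sum>l=1..q. \<omega> l ^ j))"
    unfolding sum_distrib_left \<omega>_def sum_roots_unity_power[OF q] by (intro sum.cong refl) simp
  also have "\<dots> = (\<Sum>l=1..q. \<Sum>j\<le>P. of_nat (P choose j) * \<omega> l ^ j)"
    unfolding sum_distrib_left by (rule sum.swap)
  also have "\<dots> = (\<Sum>l=1..q. (1 + \<omega> l) ^ P)"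
    using binomial_ring[of "\<omega> _" 1 P] by (simp add: add.commute)
  also have "\<dots> = of_real (2 ^ P * (\<Sum>l=1..q. (-1) ^ (l * N) * cos (pi * real l / real q) ^ P))"
  proof -
    have "(1 + \<omega> l) ^ P = of_real (2 ^ P * ((-1) ^ (l * N) * cos (pi * real l / real q) ^ P))" for l
    proof -
      have "real P * (2 * pi * real l / real q) / 2 = real (l * N) * pi"
        using q by (simp add: P_def field_simps)
      moreover have "cis (real (l * N) * pi) = (-1) ^ (l * N)"
        by (simp only: complex_eq_iff cis.sel cos_npi sin_npi) simp
      ultimately show ?thesis
        by (simp add: \<omega>_def one_plus_cis_power power_mult_distrib del: of_nat_mult)
    qed
    then show ?thesis
      by (simp add: sum_distrib_left)
  qed
  finally show ?thesis
    by (simp only: of_real_eq_iff P_def)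
qed

lemma lcm_power_nat: "lcm (x ^ e) (y ^ e) = lcm x y ^ e" for x y :: nat
proof (cases "gcd x y = 0")
  case False
  have "lcm (x ^ e) (y ^ e) * gcd x y ^ e = (x * y) ^ e"
    using prod_gcd_lcm_nat[of "x ^ e" "y ^ e"] by (simp add: power_mult_distrib mult.commute)
  also have "\<dots> = lcm x y ^ e * gcd x y ^ e"
    using prod_gcd_lcm_nat[of x y] by (metis mult.commute power_mult_distrib)
  finally show ?thesis
    using False by auto
qed (cases e; simp)

lemma Lcm_power_nat:
  fixes d :: "'a \<Rightarrow> nat"
  assumes "finite I"
  shows "Lcm ((\<lambda>i. d i ^ e) ` I) = Lcm (d ` I) ^ e"
  using assms by (induction I rule: finite_induct) (auto simp: lcm_power_nat)

lemma Lcm_power_dvd_iff: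
  fixes d :: "'a \<Rightarrow> nat"
  assumes "finite I"
  shows "Lcm (d ` I) ^ e dvd j \<longleftrightarrow> (\<forall>i\<in>I. d i ^ e dvd j)"
  by (simp add: Lcm_power_nat[OF assms, symmetric] Lcm_dvd_iff)

lemma s_fun_0: "s_fun a f g k 0 = dirichlet_conv f g k"
  by (simp add: s_fun_def dirichlet_conv_def)

lemma prod_s_fun_eq_sum_PiE:
  assumes I: "finite I" and k: "\<forall>i\<in>I. k i > 0"
  shows "(\<Prod>i\<in>I. s_fun a (f i) (g i) (k i) j)
    = (\<Sum>d\<in>PiE I (\<lambda>i. {d. d dvd k i}).
         if Lcm (d ` I) ^ a dvd j then \<Prod>i\<in>I. f i (d i) * g i (k i div d i) else 0)"
proof -
  have fin: "finite {d. d dvd k i}" if "i \<in> I" for i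
    using k that by simp
  have "(\<Prod>i\<in>I. s_fun a (f i) (g i) (k i) j)
      = (\<Sum>d\<in>PiE I (\<lambda>i. {d. d dvd k i \<and> d ^ a dvd j}). \<Prod>i\<in>I. f i (d i) * g i (k i div d i))"
    unfolding s_fun_def using I fin by (intro prod_sum_PiE) auto
  also have "PiE I (\<lambda>i. {d. d dvd k i \<and> d ^ a dvd j})
      = {d \<in> PiE I (\<lambda>i. {d. d dvd k i}). Lcm (d ` I) ^ a dvd j}"
  proof (rule set_eqI)
    fix d
    show "d \<in> PiE I (\<lambda>i. {d. d dvd k i \<and> d ^ a dvd j})
        \<longleftrightarrow> d \<in> {d \<in> PiE I (\<lambda>i. {d. d dvd k i}). Lcm (d ` I) ^ a dvd j}"
      unfolding PiE_iff using Lcm_power_dvd_iff[OF I, of d a j] by auto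
  qed
  also have "(\<Sum>d\<in>\<dots>. \<Prod>i\<in>I. f i (d i) * g i (k i div d i))
      = (\<Sum>d\<in>PiE I (\<lambda>i. {d. d dvd k i}).
          if Lcm (d ` I) ^ a dvd j then \<Prod>i\<in>I. f i (d i) * g i (k i div d i) else 0)"
    using I fin by (intro sum.inter_filter) (auto intro!: finite_PiE)
  finally show ?thesis .
qed

lemma Lcm_divisors_dvd_Lcm:
  fixes d k :: "'a \<Rightarrow> nat"
  assumes "d \<in> PiE I (\<lambda>i. {d. d dvd k i})"
  shows "Lcm (d ` I) dvd Lcm (k ` (I :: 'a set))"
  using assms by (force simp: PiE_iff Lcm_dvd_iff intro: dvd_trans[OF _ dvd_Lcm])

lemma sum_mult_sum_if_dvd:
  fixes q :: "'d \<Rightarrow> nat" and F c :: "'d \<Rightarrow> 'a :: comm_semiring_1"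
  assumes "finite J" "finite D" "\<forall>d\<in>D. q d > 0"
    and "\<And>d. d \<in> D \<Longrightarrow> (\<Sum>t\<in>{t. q d * t \<in> J}. h (q d * t)) = c d"
  shows "(\<Sum>j\<in>J. h j * (\<Sum>d\<in>D. if q d dvd j then F d else 0)) = (\<Sum>d\<in>D. F d * c d)"
proof -
  have "(\<Sum>j\<in>J. h j * (\<Sum>d\<in>D. if q d dvd j then F d else 0))
      = (\<Sum>d\<in>D. F d * (\<Sum>j\<in>J. if q d dvd j then h j else 0))"
    by (simp add: sum_distrib_left sum_distrib_right sum.swap[of _ J] if_distrib mult_ac cong: if_cong)
  also have "\<dots> = (\<Sum>d\<in>D. F d * c d)"
    using assms by (intro sum.cong refl) (simp add: sum_if_dvd_eq_sum_multiples)
  finally show ?thesis .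
qed

lemma sum_ln_Gamma_multiples:
  fixes q N :: nat
  assumes P_eq: "q * N = P" and P: "P > 0"
  shows "(\<Sum>t\<in>{t. q * t \<in> {1..P}}. ln (Gamma (real (q * t) / real P)))
    = real P / 2 * ln (2 * pi) / real q - ln (2 * pi * real P) / 2 + ln (real q) / 2"
proof -
  have q: "q > 0" and N: "N > 0"
    using P_eq P by auto
  have multiples: "{t. q * t \<in> {1..P}} = {1..N}"
    using q by (auto simp flip: P_eq)
  have fractions: "real (q * t) / real P = real t / real N" for t
    using q by (simp flip: P_eq)
  have "(\<Sum>t\<in>{t. q * t \<in> {1..P}}. ln (Gamma (real (q * t) / real P)))
      = (real N - 1) / 2 * ln (2 * pi) - ln (real N) / 2"
    unfolding multiples fractions by (rule sum_ln_Gamma_fractions[OF N])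
  also have "\<dots> = real P / 2 * ln (2 * pi) / real q - ln (2 * pi * real P) / 2 + ln (real q) / 2"
  proof -
    have "ln (2 * pi * real P) = ln (2 * pi) + ln (real q) + ln (real N)"
      using q N by (simp add: ln_mult_pos flip: P_eq)
    then show ?thesis
      using q by (simp add: field_simps flip: P_eq)
  qed
  finally show ?thesis .
qed

lemma sum_binomial_multiples:
  fixes q N :: nat
  assumes P_eq: "q * N = P" and P: "P > 0"
  shows "real (\<Sum>t\<in>{t. q * t \<in> {0..P}}. P choose (q * t))
    = 2 ^ P * (\<Sum>l=1..q. (-1) ^ (l * N) * cos (pi * real l / real q) ^ P) / real q"
proof -
  have q: "q > 0"
    using P_eq P by auto
  have "{t. q * t \<in> {0..P}} = {..N}"
    using q by (auto simp flip: P_eq)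
  then have "real (\<Sum>t\<in>{t. q * t \<in> {0..P}}. P choose (q * t)) = (\<Sum>t\<le>N. real (q * N choose (q * t)))"
    by (simp only: P_eq of_nat_sum)
  also have "\<dots> = 2 ^ P * (\<Sum>l=1..q. (-1) ^ (l * N) * cos (pi * real l / real q) ^ P) / real q"
    using binomial_multisection[OF q, of N] q unfolding P_eq by (simp add: field_simps)
  finally show ?thesis .
qed

lemma sum_bernpoly_multiples:
  fixes q N :: nat
  assumes P_eq: "q * N = P" and P: "P > 0"
  shows "(\<Sum>t\<in>{t. q * t \<in> {0..<P}}. bernpoly m (real (q * t) / real P))
    = bernoulli_num m / real P powi (int m - 1) * real q powi (int m - 1)"
proof -
  have q: "q > 0" and N: "N > 0"
    using P_eq P by auto
  have multiples: "{t. q * t \<in> {0..<P}} = {..<N}"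
    using q by (auto simp flip: P_eq)
  have fractions: "real (q * t) / real P = real t / real N" for t
    using q by (simp flip: P_eq)
  have "(\<Sum>t\<in>{t. q * t \<in> {0..<P}}. bernpoly m (real (q * t) / real P))
      = real N powi (1 - int m) * bernoulli_num m"
    unfolding multiples fractions by (rule sum_bernpoly_fractions[OF N])
  also have "real N powi (1 - int m) = real q powi (int m - 1) / real P powi (int m - 1)"
    using q N by (simp add: power_int_mult_distrib power_int_diff field_simps flip: P_eq)
  finally show ?thesis
    by (simp add: mult_ac)
qed

lemma sum_ln_Gamma_mult_divisor_sum:
  fixes q N :: "'d \<Rightarrow> nat" and F :: "'d \<Rightarrow> complex"
  assumes D: "finite D" and qN: "\<forall>d\<in>D. q d * N d = P" and P: "P > 0"
  shows "(\<Sum>j=1..P. of_real (ln (Gamma (real j / real P))) * (\<Sum>d\<in>D. if q d dvd j then F d else 0))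
    = of_real (real P / 2 * ln (2 * pi)) * (\<Sum>d\<in>D. F d / of_nat (q d))
      - of_real (ln (2 * pi * real P) / 2) * (\<Sum>d\<in>D. F d)
      + (\<Sum>d\<in>D. of_real (ln (real (q d)) / 2) * F d)"
proof -
  have q_pos: "\<forall>d\<in>D. q d > 0"
    using qN P by (metis gr0I mult_0)
  have "(\<Sum>j=1..P. of_real (ln (Gamma (real j / real P))) * (\<Sum>d\<in>D. if q d dvd j then F d else 0))
      = (\<Sum>d\<in>D. F d * of_real (real P / 2 * ln (2 * pi) / real (q d) - ln (2 * pi * real P) / 2
                                  + ln (real (q d)) / 2))"
    by (rule sum_mult_sum_if_dvd[OF finite_atLeastAtMost D q_pos])
       (simp only: of_real_sum[symmetric] sum_ln_Gamma_multiples[OF qN[rule_format] P])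
  also have "\<dots> = (\<Sum>d\<in>D. of_real (real P / 2 * ln (2 * pi)) * (F d / of_nat (q d))
      - of_real (ln (2 * pi * real P) / 2) * F d + of_real (ln (real (q d)) / 2) * F d)"
    by (intro sum.cong refl) (simp add: algebra_simps)
  also have "\<dots> = of_real (real P / 2 * ln (2 * pi)) * (\<Sum>d\<in>D. F d / of_nat (q d))
      - of_real (ln (2 * pi * real P) / 2) * (\<Sum>d\<in>D. F d)
      + (\<Sum>d\<in>D. of_real (ln (real (q d)) / 2) * F d)"
    by (simp only: sum.distrib sum_subtractf sum_distrib_left)
  finally show ?thesis .
qed

lemma sum_binomial_mult_divisor_sum:
  fixes q N :: "'d \<Rightarrow> nat" and F :: "'d \<Rightarrow> complex"
  assumes D: "finite D" and qN: "\<forall>d\<in>D. q d * N d = P" and P: "P > 0"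
  shows "(\<Sum>j=0..P. of_nat (P choose j) * (\<Sum>d\<in>D. if q d dvd j then F d else 0))
    = of_nat (2 ^ P) * (\<Sum>d\<in>D. F d / of_nat (q d)
        * of_real (\<Sum>l=1..q d. (-1) ^ (l * N d) * cos (pi * real l / real (q d)) ^ P))"
proof -
  have q_pos: "\<forall>d\<in>D. q d > 0"
    using qN P by (metis gr0I mult_0)
  have "(\<Sum>j=0..P. of_nat (P choose j) * (\<Sum>d\<in>D. if q d dvd j then F d else 0))
      = (\<Sum>d\<in>D. F d * of_real (2 ^ P * (\<Sum>l=1..q d. (-1) ^ (l * N d)
                                    * cos (pi * real l / real (q d)) ^ P) / real (q d)))"
    by (rule sum_mult_sum_if_dvd[OF finite_atLeastAtMost D q_pos])
       (simp only: of_nat_sum[symmetric] of_real_of_nat_eq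
         sum_binomial_multiples[OF qN[rule_format] P, symmetric])
  also have "\<dots> = of_nat (2 ^ P) * (\<Sum>d\<in>D. F d / of_nat (q d)
        * of_real (\<Sum>l=1..q d. (-1) ^ (l * N d) * cos (pi * real l / real (q d)) ^ P))"
    by (simp only: sum_distrib_left[of "of_nat (2 ^ P)"]) (intro sum.cong refl, simp add: field_simps)
  finally show ?thesis .
qed

lemma sum_bernpoly_mult_divisor_sum:
  fixes q N :: "'d \<Rightarrow> nat" and F :: "'d \<Rightarrow> complex"
  assumes D: "finite D" and qN: "\<forall>d\<in>D. q d * N d = P" and P: "P > 0"
  shows "(\<Sum>j=0..<P. of_real (bernpoly m (real j / real P)) * (\<Sum>d\<in>D. if q d dvd j then F d else 0))
    = of_real (bernoulli_num m / real P powi (int m - 1))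
      * (\<Sum>d\<in>D. of_real (real (q d) powi (int m - 1)) * F d)"
proof -
  have q_pos: "\<forall>d\<in>D. q d > 0"
    using qN P by (metis gr0I mult_0)
  have "(\<Sum>j=0..<P. of_real (bernpoly m (real j / real P)) * (\<Sum>d\<in>D. if q d dvd j then F d else 0))
      = (\<Sum>d\<in>D. F d * of_real (bernoulli_num m / real P powi (int m - 1) * real (q d) powi (int m - 1)))"
    by (rule sum_mult_sum_if_dvd[OF finite_atLeastLessThan D q_pos])
       (simp only: of_real_sum[symmetric] sum_bernpoly_multiples[OF qN[rule_format] P])
  also have "\<dots> = of_real (bernoulli_num m / real P powi (int m - 1))
      * (\<Sum>d\<in>D. of_real (real (q d) powi (int m - 1)) * F d)"
    by (simp add: sum_distrib_left mult_ac)
  finally show ?thesis .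
qed

theorem theorem3:
  fixes n a :: nat
    and k :: "nat \<Rightarrow> nat"
    and f g :: "nat \<Rightarrow> nat \<Rightarrow> complex"
  assumes n_pos: "n \<ge> 1"
    and a_ge: "a \<ge> 2"
    and k_pos: "\<forall>i<n. k i \<ge> 1"
  defines "K \<equiv> Lcm (k ` {..<n})"
    and "D \<equiv> PiE {..<n} (\<lambda>i. {d. d dvd k i})"
    and "M \<equiv> (\<lambda>d::nat \<Rightarrow> nat. Lcm (d ` {..<n}))"
    and "F \<equiv> (\<lambda>d::nat \<Rightarrow> nat. \<Prod>i<n. f i (d i) * g i (k i div d i))"
    and "G \<equiv> (\<lambda>j::nat. \<Prod>i<n. s_fun a (f i) (g i) (k i) j)"
  shows
    "((\<Sum>j=1..K^a. complex_of_real (ln (Gamma (real j / real (K^a)))) * G j)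
       = of_real (real (K^a) / 2 * ln (2 * pi)) * (\<Sum>d\<in>D. F d / of_nat (M d ^ a))
         - of_real (ln (2 * pi * real (K^a)) / 2) * (\<Prod>i<n. dirichlet_conv (f i) (g i) (k i))
         + of_real (real a / 2) * (\<Sum>d\<in>D. of_real (ln (real (M d))) * F d))
   \<and> ((\<Sum>j=0..K^a. of_nat (K^a choose j) * G j)
       = of_nat (2 ^ (K^a)) * (\<Sum>d\<in>D. F d / of_nat (M d ^ a) *
           of_real (\<Sum>l=1..M d ^ a. (-1) ^ (l * (Lcm (k ` {..<n}) div Lcm (d ` {..<n})) ^ a) * cos (pi * real l / real (M d ^ a)) ^ (K^a))))
   \<and> (\<forall>m::nat. (\<Sum>j=0..<K^a. of_real (bernpoly m (real j / real (K^a))) * G j)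
       = of_real (bernoulli_num m / real K powi (int a * (int m - 1)))
           * (\<Sum>d\<in>D. of_real (real (M d) powi (int a * (int m - 1))) * F d))"
proof -
  have k: "\<forall>i\<in>{..<n}. k i > 0"
    using k_pos by auto
  have D: "finite D"
    unfolding D_def using k by (auto intro!: finite_PiE)
  have G_eq: "G j = (\<Sum>d\<in>D. if M d ^ a dvd j then F d else 0)" for j
    unfolding G_def D_def M_def F_def by (rule prod_s_fun_eq_sum_PiE[OF _ k]) simp
  have conv: "(\<Prod>i<n. dirichlet_conv (f i) (g i) (k i)) = (\<Sum>d\<in>D. F d)"
    using G_eq[of 0] by (simp add: G_def s_fun_0)
  have "K \<noteq> 0"
    unfolding K_def using k_pos by (subst Lcm_0_iff) fastforce+
  then have P: "K ^ a > 0"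
    by simp
  have cofactor: "\<forall>d\<in>D. M d ^ a * (K div M d) ^ a = K ^ a"
  proof
    fix d assume "d \<in> D"
    then have "M d dvd K"
      unfolding D_def M_def K_def by (rule Lcm_divisors_dvd_Lcm)
    then show "M d ^ a * (K div M d) ^ a = K ^ a"
      by (simp flip: power_mult_distrib)
  qed
  have ln_M: "ln (real (M d ^ a)) / 2 = real a / 2 * ln (real (M d))" for d
    by (simp add: ln_realpow)
  have powi_M: "real (x ^ a) powi (int m - 1) = real x powi (int a * (int m - 1))" for x m
    by (simp add: power_int_mult)
  show ?thesis (is "?ln_Gamma \<and> ?binomial \<and> (\<forall>m. ?bernpoly m)")
  proof (intro conjI allI)
    show ?ln_Gamma
      using sum_ln_Gamma_mult_divisor_sum[OF D cofactor P, of F]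
      by (simp add: G_eq ln_M conv sum_distrib_left mult_ac del: of_nat_power)
  next
    show ?binomial
      using sum_binomial_mult_divisor_sum[OF D cofactor P, of F]
      by (simp only: G_eq K_def M_def)
  next
    fix m
    show "?bernpoly m"
      using sum_bernpoly_mult_divisor_sum[OF D cofactor P, of m F]
      by (simp only: G_eq powi_M)
  qed
qed

end
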